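(* Let $M>0$, $T>0$, $X=[0,M]$ periodic, and fix $n\in\mathbf N$, $n\ge4$. Let $a,b$ be functions on $X\times[0,T]$, periodic in $x$, with $a\in C([0,T];C^{n+3})$, $a_t\in C([0,T];C^n)$, $b\in C([0,T];C^{n+2})$, $b_t\in C([0,T];C^n)$, and suppose there is $a_0>0$ with $a(x,t)\ge a_0$ for all $x,t$, and that $\bar\delta(t):=\frac1M\int_0^M\frac{b(y,t)}{|a(y,t)|}dy\ge0$ for all $t\in[0,T]$. (The lower-order coefficients $c,d\in C([0,T];C^n)$, $e\in L^\infty([0,T];H^n)$ play no role.) Define $$g_n(x,t):=\big(a(x,t)\big)^{1/2-n/3}\exp\Big[-\frac13\int_0^x\Big(\frac{b(y,t)}{a(y,t)}-\bar\delta(t)\Big)dy\Big].$$ Then $g_n$ satisfies: (C1) there is a constant $k_g>1$ with $k_g^{-1}\le g_n(x,t)\le k_g$ for all $x,t$; (C2) $g_n\in C([0,T];C^{n+3})$ and $\partial_tg_n\in C([0,T];C^n)$; (C3) $g_n$ and its first $n$ derivatives satisfy periodic boundary conditions; (C4) $\big(\tfrac32-n\big)a_x-b-3a\frac{\partial_xg_n}{g_n}\le0$ for all $x\in X$, $t\in[0,T]$.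
   Context: $C^k$ and $H^n$ denote spaces of $M$-periodic functions on $X$. *)

theory Defs
  imports "HOL-Analysis.Analysis"
begin

text \<open>Functions of (x,t) are modelled as real \<Rightarrow> real \<Rightarrow> real, defined for all real x
  (M-periodic extension of X = [0,M]) and only relevant for t in [0,T].\<close>

definition Ck_per :: "real \<Rightarrow> nat \<Rightarrow> (real \<Rightarrow> real) \<Rightarrow> bool" where
  "Ck_per M k f \<longleftrightarrow>
     (\<forall>x. f (x + M) = f x) \<and>
     (\<forall>j<k. \<forall>x. ((deriv ^^ j) f has_real_derivative (deriv ^^ Suc j) f x) (at x)) \<and>
     continuous_on UNIV ((deriv ^^ k) f)"

text \<open>C([0,T]; C^k): t \<mapsto> u(.,t) is continuous from [0,T] into C^k with its C^k norm
  (uniform convergence of all x-derivatives of order \<le> k).\<close>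
definition C_time_Ck :: "real \<Rightarrow> real \<Rightarrow> nat \<Rightarrow> (real \<Rightarrow> real \<Rightarrow> real) \<Rightarrow> bool" where
  "C_time_Ck M T k u \<longleftrightarrow>
     (\<forall>t\<in>{0..T}. Ck_per M k (\<lambda>x. u x t)) \<and>
     (\<forall>j\<le>k. \<forall>t\<in>{0..T}. \<forall>\<epsilon>>0. \<exists>\<delta>>0. \<forall>s\<in>{0..T}. \<bar>s - t\<bar> < \<delta> \<longrightarrow>
        (\<forall>x. \<bar>(deriv ^^ j) (\<lambda>y. u y s) x - (deriv ^^ j) (\<lambda>y. u y t) x\<bar> \<le> \<epsilon>))"

definition is_time_deriv :: "real \<Rightarrow> (real \<Rightarrow> real \<Rightarrow> real) \<Rightarrow> (real \<Rightarrow> real \<Rightarrow> real) \<Rightarrow> bool" where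
  "is_time_deriv T u ut \<longleftrightarrow>
     (\<forall>x. \<forall>t\<in>{0..T}. ((\<lambda>s. u x s) has_real_derivative ut x t) (at t within {0..T}))"

definition delta_bar :: "real \<Rightarrow> (real \<Rightarrow> real \<Rightarrow> real) \<Rightarrow> (real \<Rightarrow> real \<Rightarrow> real) \<Rightarrow> real \<Rightarrow> real" where
  "delta_bar M a b t = (1 / M) * (LBINT y=0..M. b y t / \<bar>a y t\<bar>)"

definition g_n :: "real \<Rightarrow> nat \<Rightarrow> (real \<Rightarrow> real \<Rightarrow> real) \<Rightarrow> (real \<Rightarrow> real \<Rightarrow> real) \<Rightarrow> real \<Rightarrow> real \<Rightarrow> real" where
  "g_n M n a b x t =
     a x t powr (1/2 - real n / 3) *
     exp (- (1/3) * (LBINT y=0..x. b y t / a y t - delta_bar M a b t))"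

end

theory Submission
  imports Defs
begin

text \<open>Where \<open>a > 0\<close>, \<open>g_n = exp L\<close> with \<open>L = (1/2 - n/3) ln a - P/3\<close>, where \<open>P\<close> is the primitive of
  \<open>b/a - \<delta>\<close> and \<open>\<delta>\<close> is the mean of \<open>b/a\<close> over a period. Subtracting the mean makes \<open>P\<close> periodic, so
  \<open>L\<close> lies in the same class \<open>C([0,T]; C\<^sup>k)\<close> of periodic functions as its ingredients; this class is
  closed under sums, products, \<open>exp\<close>, \<open>ln\<close> and reciprocals of functions bounded away from 0, and a
  periodic function continuous on \<open>X \<times> [0,T]\<close> is bounded. Hence \<open>g_n\<close> is bounded above and away
  from 0, and differentiating \<open>P\<close> in time under the integral (Leibniz) gives \<open>\<partial>\<^sub>t g_n\<close>. Finally
  \<open>3a \<partial>\<^sub>x g_n / g_n = (3/2 - n) a\<^sub>x - b + a \<delta>\<close>, so the expression in (C4) equals \<open>-a \<delta> \<le> 0\<close>.\<close>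

section \<open>Periodic functions\<close>

lemma periodic_int_shift:
  fixes f :: "real \<Rightarrow> 'a"
  assumes "\<forall>x. f (x + M) = f x"
  shows "f (x + of_int k * M) = f x"
proof (induction k arbitrary: x rule: int_induct[where k=0])
  case base
  then show ?case by simp
next
  case (step1 i)
  have "f (x + of_int (i + 1) * M) = f (x + M + of_int i * M)"
    by (simp add: algebra_simps)
  also have "\<dots> = f x" using step1 assms by simp
  finally show ?case .
next
  case (step2 i)
  have "f (x + of_int (i - 1) * M) = f (x + of_int (i - 1) * M + M)" using assms by simp
  also have "\<dots> = f (x + of_int i * M)" by (simp add: algebra_simps)
  finally show ?case using step2 by simp
qed

lemma shift_into_period:
  fixes x M :: real
  assumes M: "M > 0"
  obtains k :: int where "x + of_int k * M \<in> {0..M}"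
proof
  let ?k = "\<lfloor>x / M\<rfloor>"
  have a: "of_int ?k \<le> x / M" and b: "x / M < of_int ?k + 1" by linarith+
  have "of_int ?k * M \<le> x" using a pos_le_divide_eq[OF M] by simp
  moreover have "x < (of_int ?k + 1) * M" by (metis b pos_divide_less_eq[OF M])
  ultimately show "x + of_int (- ?k) * M \<in> {0..M}" by (auto simp: algebra_simps)
qed

lemma periodic_value_in_period:
  fixes f :: "real \<Rightarrow> 'a"
  assumes "M > 0" "\<forall>x. f (x + M) = f x"
  obtains y where "y \<in> {0..M}" "f x = f y"
  using shift_into_period[OF assms(1), of x] periodic_int_shift[of f M, OF assms(2)] by metis

lemma deriv_periodic:
  assumes "\<forall>x. f (x + M) = f x" "\<forall>x. (f has_real_derivative deriv f x) (at x)"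
  shows "deriv f (x + M) = deriv f x"
proof -
  have "((\<lambda>y. y + M) has_real_derivative 1) (at x)"
    by (auto intro!: derivative_eq_intros)
  from DERIV_chain2[OF assms(2)[rule_format] this]
  have "((\<lambda>y. f (y + M)) has_real_derivative deriv f (x + M)) (at x)" by simp
  moreover have "(\<lambda>y. f (y + M)) = f" using assms(1) by simp
  ultimately show ?thesis using assms(2) DERIV_unique by metis
qed

lemma Ck_per_0_iff: "Ck_per M 0 f \<longleftrightarrow> (\<forall>x. f (x + M) = f x) \<and> continuous_on UNIV f"
  by (simp add: Ck_per_def)

lemma Ck_per_Suc_iff: "Ck_per M (Suc k) f \<longleftrightarrow> (\<forall>x. f (x + M) = f x) \<and>
   (\<forall>x. (f has_real_derivative deriv f x) (at x)) \<and> Ck_per M k (deriv f)"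
proof
  assume A: "Ck_per M (Suc k) f"
  then have p: "\<forall>x. f (x + M) = f x" and d: "\<forall>x. (f has_real_derivative deriv f x) (at x)"
    unfolding Ck_per_def by (auto dest: spec[of _ 0])
  have "\<forall>j<k. \<forall>x. ((deriv ^^ j) (deriv f) has_real_derivative (deriv ^^ Suc j) (deriv f) x) (at x)"
    using A unfolding Ck_per_def
    by (metis Suc_mono funpow_Suc_right o_apply)
  moreover have "continuous_on UNIV ((deriv ^^ k) (deriv f))"
    using A unfolding Ck_per_def by (metis funpow_Suc_right o_apply)
  ultimately show "(\<forall>x. f (x + M) = f x) \<and>
   (\<forall>x. (f has_real_derivative deriv f x) (at x)) \<and> Ck_per M k (deriv f)"
    using p d deriv_periodic[OF p d] unfolding Ck_per_def by auto
next
  assume A: "(\<forall>x. f (x + M) = f x) \<and>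
   (\<forall>x. (f has_real_derivative deriv f x) (at x)) \<and> Ck_per M k (deriv f)"
  have "\<forall>j<Suc k. \<forall>x. ((deriv ^^ j) f has_real_derivative (deriv ^^ Suc j) f x) (at x)"
  proof (intro allI impI)
    fix j x assume "j < Suc k"
    then show "((deriv ^^ j) f has_real_derivative (deriv ^^ Suc j) f x) (at x)"
    proof (cases j)
      case 0 then show ?thesis using A by simp
    next
      case (Suc i) then show ?thesis using A \<open>j < Suc k\<close> unfolding Ck_per_def
        by (metis Suc_less_SucD funpow_Suc_right o_apply)
    qed
  qed
  then show "Ck_per M (Suc k) f" using A unfolding Ck_per_def by (metis funpow_Suc_right o_apply)
qed

lemma Ck_per_funpow_deriv_periodic: "Ck_per M k f \<Longrightarrow> j \<le> k \<Longrightarrow> (deriv ^^ j) f (x + M) = (deriv ^^ j) f x"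
proof (induction j arbitrary: f k)
  case 0 thus ?case by (simp add: Ck_per_def)
next
  case (Suc j)
  then obtain k' where k: "k = Suc k'" by (cases k) auto
  have "Ck_per M k' (deriv f)" using Suc.prems(1) Ck_per_Suc_iff k by blast
  then have "(deriv ^^ j) (deriv f) (x + M) = (deriv ^^ j) (deriv f) x" using Suc.IH Suc.prems(2) k by simp
  thus ?case by (simp only: funpow_Suc_right comp_apply)
qed

section \<open>The classes \<open>C([0,T]; C\<^sup>k)\<close>\<close>

definition x_deriv :: "(real \<Rightarrow> real \<Rightarrow> real) \<Rightarrow> real \<Rightarrow> real \<Rightarrow> real" where
  "x_deriv u x t = deriv (\<lambda>y. u y t) x"

lemma C_time_Ck_0_iff:
  "C_time_Ck M T 0 u \<longleftrightarrow>
     (\<forall>t\<in>{0..T}. (\<forall>x. u (x + M) t = u x t) \<and> continuous_on UNIV (\<lambda>x. u x t)) \<and>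
     (\<forall>t\<in>{0..T}. \<forall>\<epsilon>>0. \<exists>\<delta>>0. \<forall>s\<in>{0..T}. \<bar>s - t\<bar> < \<delta> \<longrightarrow> (\<forall>x. \<bar>u x s - u x t\<bar> \<le> \<epsilon>))"
  by (simp add: C_time_Ck_def Ck_per_0_iff)

lemma C_time_Ck_Suc_iff:
  "C_time_Ck M T (Suc k) u \<longleftrightarrow> C_time_Ck M T 0 u \<and>
     (\<forall>t\<in>{0..T}. \<forall>x. ((\<lambda>y. u y t) has_real_derivative x_deriv u x t) (at x)) \<and>
     C_time_Ck M T k (x_deriv u)"
proof -
  have e: "(\<lambda>y. x_deriv u y t) = deriv (\<lambda>y. u y t)" for t by (simp add: x_deriv_def[abs_def])
  have f: "(deriv ^^ Suc j) (\<lambda>y. u y s) = (deriv ^^ j) (\<lambda>y. x_deriv u y s)" for j s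
    by (simp only: funpow_Suc_right comp_apply e)
  have split: "(\<forall>j\<le>Suc k. P j) \<longleftrightarrow> P 0 \<and> (\<forall>j\<le>k. P (Suc j))" for P
    by (metis Suc_le_mono le_SucE less_Suc_eq_0_disj less_Suc_eq_le)
  have c: "(\<forall>x. (g has_real_derivative deriv g x) (at x)) \<Longrightarrow> continuous_on UNIV g" for g :: "real \<Rightarrow> real"
    by (meson DERIV_isCont continuous_at_imp_continuous_on)
  show ?thesis
    unfolding C_time_Ck_def split f Ck_per_Suc_iff Ck_per_0_iff e
    using c by (auto simp: x_deriv_def)
qed

lemma C_time_Ck_cong:
  assumes "C_time_Ck M T k u" "\<And>x t. t \<in> {0..T} \<Longrightarrow> u x t = v x t"
  shows "C_time_Ck M T k v"
proof -
  have "t \<in> {0..T} \<Longrightarrow> (\<lambda>x. u x t) = (\<lambda>x. v x t)" for t using assms(2) by auto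
  then show ?thesis using assms(1) unfolding C_time_Ck_def by simp
qed

lemma C_time_Ck_Suc_imp: "C_time_Ck M T (Suc k) u \<Longrightarrow> C_time_Ck M T k u"
proof (induction k arbitrary: u)
  case 0
  then show ?case using C_time_Ck_Suc_iff by blast
next
  case (Suc k)
  then show ?case using C_time_Ck_Suc_iff[of M T "Suc k" u] C_time_Ck_Suc_iff[of M T k u] by blast
qed

lemma C_time_Ck_le_imp: "C_time_Ck M T k u \<Longrightarrow> j \<le> k \<Longrightarrow> C_time_Ck M T j u"
  by (induction k) (auto intro: C_time_Ck_Suc_imp simp: le_Suc_eq)

lemma C_time_Ck_SucI:
  assumes "C_time_Ck M T 0 u" "C_time_Ck M T k u'"
    and "\<And>t x. t \<in> {0..T} \<Longrightarrow> ((\<lambda>y. u y t) has_real_derivative u' x t) (at x)"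
  shows "C_time_Ck M T (Suc k) u"
proof -
  have "x_deriv u x t = u' x t" if "t \<in> {0..T}" for x t
    unfolding x_deriv_def using assms(3)[OF that] by (rule DERIV_imp_deriv)
  with assms show ?thesis
    unfolding C_time_Ck_Suc_iff by (auto intro: C_time_Ck_cong[of M T k u'])
qed

lemma C_time_Ck_SucD:
  assumes "C_time_Ck M T (Suc k) u"
  shows "C_time_Ck M T 0 u" "C_time_Ck M T k u" "C_time_Ck M T k (x_deriv u)"
    and "\<And>t x. t \<in> {0..T} \<Longrightarrow> ((\<lambda>y. u y t) has_real_derivative x_deriv u x t) (at x)"
  using assms C_time_Ck_Suc_iff C_time_Ck_Suc_imp by blast+

lemma C_time_C0_continuous_on:
  assumes "C_time_Ck M T 0 u"
  shows "continuous_on (UNIV \<times> {0..T}) (\<lambda>(x, t). u x t)"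
  unfolding continuous_on_iff
proof (intro ballI allI impI)
  fix z :: "real \<times> real" and e :: real
  assume z: "z \<in> UNIV \<times> {0..T}" and e: "0 < e"
  obtain x t where z_eq: "z = (x, t)" and t: "t \<in> {0..T}" using z by auto
  obtain d1 where d1: "d1 > 0" "\<forall>s\<in>{0..T}. \<bar>s - t\<bar> < d1 \<longrightarrow> (\<forall>x. \<bar>u x s - u x t\<bar> \<le> e/2)"
    using assms t e unfolding C_time_Ck_0_iff by (meson half_gt_zero)
  have "continuous_on UNIV (\<lambda>x. u x t)" using assms t unfolding C_time_Ck_0_iff by auto
  then obtain d2 where d2: "d2 > 0" "\<forall>y. dist y x < d2 \<longrightarrow> dist (u y t) (u x t) < e/2"
    unfolding continuous_on_iff using e by (meson UNIV_I half_gt_zero)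
  show "\<exists>d>0. \<forall>z'\<in>UNIV \<times> {0..T}. dist z' z < d \<longrightarrow> dist ((\<lambda>(x, t). u x t) z') ((\<lambda>(x, t). u x t) z) < e"
  proof (intro exI[of _ "min d1 d2"] conjI ballI impI)
    fix z' assume z': "z' \<in> UNIV \<times> {0..T}" and close: "dist z' z < min d1 d2"
    obtain y s where z'_eq: "z' = (y, s)" and s: "s \<in> {0..T}" using z' by auto
    have "dist y x \<le> dist (y, s) (x, t)" "dist s t \<le> dist (y, s) (x, t)"
      by (metis dist_fst_le fst_conv, metis dist_snd_le snd_conv)
    then have "dist y x < d2" "\<bar>s - t\<bar> < d1" using close z_eq z'_eq by (auto simp: dist_real_def)
    then have "\<bar>u y s - u y t\<bar> \<le> e/2" "\<bar>u y t - u x t\<bar> < e/2"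
      using d1 d2 s by (auto simp: dist_real_def)
    then show "dist ((\<lambda>(x, t). u x t) z') ((\<lambda>(x, t). u x t) z) < e"
      using abs_triangle_ineq[of "u y s - u y t" "u y t - u x t"] z_eq z'_eq
      by (simp add: dist_real_def)
  qed (simp add: d1(1) d2(1))
qed

lemma C_time_C0_bounded:
  assumes "M > 0" "C_time_Ck M T 0 u"
  obtains B where "\<And>x t. t \<in> {0..T} \<Longrightarrow> \<bar>u x t\<bar> \<le> B"
proof -
  have "compact ((\<lambda>(x, t). u x t) ` ({0..M} \<times> {0..T}))"
    by (rule compact_continuous_image[OF continuous_on_subset[OF C_time_C0_continuous_on[OF assms(2)]]])
       (auto intro: compact_Times)
  then obtain B where B: "\<forall>z\<in>(\<lambda>(x, t). u x t) ` ({0..M} \<times> {0..T}). norm z \<le> B"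
    using compact_imp_bounded bounded_iff by metis
  show ?thesis
  proof
    fix x t assume t: "t \<in> {0..T}"
    have "\<forall>x. u (x + M) t = u x t" using assms(2) t unfolding C_time_Ck_0_iff by blast
    then obtain y where "y \<in> {0..M}" "u x t = u y t"
      by (rule periodic_value_in_period[OF assms(1), of "\<lambda>x. u x t"])
    then show "\<bar>u x t\<bar> \<le> B" using B t by force
  qed
qed

lemma C_time_C0_const:
  assumes "continuous_on {0..T} c"
  shows "C_time_Ck M T 0 (\<lambda>x t. c t)"
  unfolding C_time_Ck_0_iff
proof (intro conjI ballI allI impI)
  fix t e :: real assume "t \<in> {0..T}" "0 < e"
  then obtain d where "d > 0" "\<forall>s\<in>{0..T}. dist s t < d \<longrightarrow> dist (c s) (c t) < e"
    using assms unfolding continuous_on_iff by blast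
  then show "\<exists>\<delta>>0. \<forall>s\<in>{0..T}. \<bar>s - t\<bar> < \<delta> \<longrightarrow> (\<forall>x. \<bar>c s - c t\<bar> \<le> e)"
    by (auto simp: dist_real_def intro!: exI[of _ d] less_imp_le)
qed auto

lemma C_time_C0_add:
  assumes "C_time_Ck M T 0 u" "C_time_Ck M T 0 v"
  shows "C_time_Ck M T 0 (\<lambda>x t. u x t + v x t)"
  unfolding C_time_Ck_0_iff
proof (intro conjI ballI allI impI)
  fix t e :: real assume t: "t \<in> {0..T}" and e: "0 < e"
  obtain d1 where d1: "d1 > 0" "\<forall>s\<in>{0..T}. \<bar>s - t\<bar> < d1 \<longrightarrow> (\<forall>x. \<bar>u x s - u x t\<bar> \<le> e/2)"
    using assms t e unfolding C_time_Ck_0_iff by (meson half_gt_zero)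
  obtain d2 where d2: "d2 > 0" "\<forall>s\<in>{0..T}. \<bar>s - t\<bar> < d2 \<longrightarrow> (\<forall>x. \<bar>v x s - v x t\<bar> \<le> e/2)"
    using assms t e unfolding C_time_Ck_0_iff by (meson half_gt_zero)
  show "\<exists>\<delta>>0. \<forall>s\<in>{0..T}. \<bar>s - t\<bar> < \<delta> \<longrightarrow> (\<forall>x. \<bar>u x s + v x s - (u x t + v x t)\<bar> \<le> e)"
  proof (intro exI[of _ "min d1 d2"] conjI ballI impI allI)
    fix s x assume "s \<in> {0..T}" "\<bar>s - t\<bar> < min d1 d2"
    then have "\<bar>u x s - u x t\<bar> \<le> e/2" "\<bar>v x s - v x t\<bar> \<le> e/2" using d1 d2 by auto
    then show "\<bar>u x s + v x s - (u x t + v x t)\<bar> \<le> e" by linarith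
  qed (simp add: d1(1) d2(1))
next
  fix t :: real assume t: "t \<in> {0..T}"
  have "continuous_on UNIV (\<lambda>x. u x t)" "continuous_on UNIV (\<lambda>x. v x t)"
    using assms t unfolding C_time_Ck_0_iff by blast+
  then show "continuous_on UNIV (\<lambda>x. u x t + v x t)" by (intro continuous_intros)
  fix x show "u (x + M) t + v (x + M) t = u x t + v x t"
    using assms t unfolding C_time_Ck_0_iff by simp
qed

lemma C_time_C0_mult:
  assumes "M > 0" "C_time_Ck M T 0 u" "C_time_Ck M T 0 v"
  shows "C_time_Ck M T 0 (\<lambda>x t. u x t * v x t)"
  unfolding C_time_Ck_0_iff
proof (intro conjI ballI allI impI)
  fix t e :: real assume t: "t \<in> {0..T}" and e: "0 < e"
  obtain Bu where Bu: "\<And>x t. t \<in> {0..T} \<Longrightarrow> \<bar>u x t\<bar> \<le> Bu"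
    using C_time_C0_bounded[OF assms(1,2)] by blast
  obtain Bv where Bv: "\<And>x t. t \<in> {0..T} \<Longrightarrow> \<bar>v x t\<bar> \<le> Bv"
    using C_time_C0_bounded[OF assms(1,3)] by blast
  define K where "K = \<bar>Bu\<bar> + \<bar>Bv\<bar> + 1"
  have K: "K > 0" "e / K > 0" using e by (simp_all add: K_def add_pos_nonneg)
  obtain d1 where d1: "d1 > 0" "\<forall>s\<in>{0..T}. \<bar>s - t\<bar> < d1 \<longrightarrow> (\<forall>x. \<bar>u x s - u x t\<bar> \<le> e/K)"
    using assms(2) t K unfolding C_time_Ck_0_iff by meson
  obtain d2 where d2: "d2 > 0" "\<forall>s\<in>{0..T}. \<bar>s - t\<bar> < d2 \<longrightarrow> (\<forall>x. \<bar>v x s - v x t\<bar> \<le> e/K)"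
    using assms(3) t K unfolding C_time_Ck_0_iff by meson
  show "\<exists>\<delta>>0. \<forall>s\<in>{0..T}. \<bar>s - t\<bar> < \<delta> \<longrightarrow> (\<forall>x. \<bar>u x s * v x s - u x t * v x t\<bar> \<le> e)"
  proof (intro exI[of _ "min d1 d2"] conjI ballI impI allI)
    fix s x assume s: "s \<in> {0..T}" "\<bar>s - t\<bar> < min d1 d2"
    then have diffs: "\<bar>u x s - u x t\<bar> \<le> e/K" "\<bar>v x s - v x t\<bar> \<le> e/K" using d1 d2 by auto
    have bounds: "\<bar>u x s\<bar> \<le> \<bar>Bu\<bar>" "\<bar>v x t\<bar> \<le> \<bar>Bv\<bar>"
      using Bu[OF s(1), of x] Bv[OF t, of x] by linarith+
    have "\<bar>u x s * v x s - u x t * v x t\<bar> = \<bar>u x s * (v x s - v x t) + v x t * (u x s - u x t)\<bar>"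
      by (simp add: algebra_simps)
    also have "\<dots> \<le> \<bar>u x s\<bar> * \<bar>v x s - v x t\<bar> + \<bar>v x t\<bar> * \<bar>u x s - u x t\<bar>"
      by (metis abs_mult abs_triangle_ineq)
    also have "\<dots> \<le> \<bar>Bu\<bar> * (e/K) + \<bar>Bv\<bar> * (e/K)"
      by (intro add_mono mult_mono diffs bounds) auto
    also have "\<dots> = (\<bar>Bu\<bar> + \<bar>Bv\<bar>) * (e/K)" by (metis distrib_right)
    also have "\<dots> \<le> K * (e/K)" using K by (intro mult_right_mono) (auto simp: K_def)
    also have "\<dots> = e" using K by simp
    finally show "\<bar>u x s * v x s - u x t * v x t\<bar> \<le> e" .
  qed (simp add: d1(1) d2(1))
next
  fix t :: real assume t: "t \<in> {0..T}"
  have "continuous_on UNIV (\<lambda>x. u x t)" "continuous_on UNIV (\<lambda>x. v x t)"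
    using assms(2,3) t unfolding C_time_Ck_0_iff by blast+
  then show "continuous_on UNIV (\<lambda>x. u x t * v x t)" by (intro continuous_intros)
  fix x show "u (x + M) t * v (x + M) t = u x t * v x t"
    using assms(2,3) t unfolding C_time_Ck_0_iff by simp
qed

lemma C_time_C0_comp_uniformly_continuous:
  assumes "C_time_Ck M T 0 u" "\<And>x t. t \<in> {0..T} \<Longrightarrow> u x t \<in> S" "uniformly_continuous_on S \<phi>"
  shows "C_time_Ck M T 0 (\<lambda>x t. \<phi> (u x t))"
  unfolding C_time_Ck_0_iff
proof (intro conjI ballI allI impI)
  fix t e :: real assume t: "t \<in> {0..T}" and e: "0 < e"
  obtain d where d: "d > 0" "\<forall>x\<in>S. \<forall>x'\<in>S. dist x' x < d \<longrightarrow> dist (\<phi> x') (\<phi> x) < e"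
    using assms(3) e unfolding uniformly_continuous_on_def by blast
  obtain d1 where d1: "d1 > 0" "\<forall>s\<in>{0..T}. \<bar>s - t\<bar> < d1 \<longrightarrow> (\<forall>x. \<bar>u x s - u x t\<bar> \<le> d/2)"
    using assms(1) t d unfolding C_time_Ck_0_iff by (meson half_gt_zero)
  show "\<exists>\<delta>>0. \<forall>s\<in>{0..T}. \<bar>s - t\<bar> < \<delta> \<longrightarrow> (\<forall>x. \<bar>\<phi> (u x s) - \<phi> (u x t)\<bar> \<le> e)"
  proof (intro exI[of _ d1] conjI ballI impI allI)
    fix s x assume s: "s \<in> {0..T}" "\<bar>s - t\<bar> < d1"
    then have "\<bar>u x s - u x t\<bar> \<le> d/2" using d1 by blast
    then have "dist (u x s) (u x t) < d" using d by (simp add: dist_real_def)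
    moreover have "u x s \<in> S" "u x t \<in> S" using assms(2) s t by auto
    ultimately have "dist (\<phi> (u x s)) (\<phi> (u x t)) < e" using d(2) by blast
    then show "\<bar>\<phi> (u x s) - \<phi> (u x t)\<bar> \<le> e" by (simp add: dist_real_def)
  qed (rule d1(1))
next
  fix t :: real assume t: "t \<in> {0..T}"
  have "continuous_on UNIV (\<lambda>x. u x t)" using assms(1) t unfolding C_time_Ck_0_iff by auto
  moreover have "(\<lambda>x. u x t) ` UNIV \<subseteq> S" using assms(2) t by blast
  ultimately show "continuous_on UNIV (\<lambda>x. \<phi> (u x t))"
    by (rule continuous_on_compose2[OF uniformly_continuous_imp_continuous[OF assms(3)]])
  fix x show "\<phi> (u (x + M) t) = \<phi> (u x t)" using assms(1) t unfolding C_time_Ck_0_iff by simp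
qed

lemma C_time_C0_comp_continuous:
  assumes "M > 0" "C_time_Ck M T 0 u" "\<And>x t. t \<in> {0..T} \<Longrightarrow> u x t \<in> S"
    and "closed S" "continuous_on S \<phi>"
  shows "C_time_Ck M T 0 (\<lambda>x t. \<phi> (u x t))"
proof -
  obtain B where B: "\<And>x t. t \<in> {0..T} \<Longrightarrow> \<bar>u x t\<bar> \<le> B"
    using C_time_C0_bounded[OF assms(1,2)] by blast
  have "compact (S \<inter> {-B..B})" using assms(4) by (simp add: closed_Int_compact)
  then have "uniformly_continuous_on (S \<inter> {-B..B}) \<phi>"
    using compact_uniformly_continuous continuous_on_subset[OF assms(5)] by blast
  moreover have "u x t \<in> S \<inter> {-B..B}" if "t \<in> {0..T}" for x t
    using assms(3)[OF that, of x] B[OF that, of x] by (auto simp: abs_le_iff)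
  ultimately show ?thesis
    using C_time_C0_comp_uniformly_continuous[OF assms(2)] by blast
qed

lemma C_time_Ck_const: "continuous_on {0..T} c \<Longrightarrow> C_time_Ck M T k (\<lambda>x t. c t)"
proof (induction k arbitrary: c)
  case (Suc k)
  show ?case
    by (rule C_time_Ck_SucI[where u'="\<lambda>x t. 0"])
       (auto intro!: C_time_C0_const Suc continuous_intros)
qed (rule C_time_C0_const)

lemma C_time_Ck_add:
  "C_time_Ck M T k u \<Longrightarrow> C_time_Ck M T k v \<Longrightarrow> C_time_Ck M T k (\<lambda>x t. u x t + v x t)"
proof (induction k arbitrary: u v)
  case (Suc k)
  note u = C_time_Ck_SucD[OF Suc.prems(1)] and v = C_time_Ck_SucD[OF Suc.prems(2)]
  show ?case
    by (rule C_time_Ck_SucI[where u'="\<lambda>x t. x_deriv u x t + x_deriv v x t"])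
       (auto intro!: C_time_C0_add Suc.IH u v derivative_eq_intros)
qed (rule C_time_C0_add)

context
  fixes M T :: real
  assumes M_pos: "M > 0"
begin

lemma C_time_Ck_mult:
  "C_time_Ck M T k u \<Longrightarrow> C_time_Ck M T k v \<Longrightarrow> C_time_Ck M T k (\<lambda>x t. u x t * v x t)"
proof (induction k arbitrary: u v)
  case (Suc k)
  note u = C_time_Ck_SucD[OF Suc.prems(1)] and v = C_time_Ck_SucD[OF Suc.prems(2)]
  show ?case
    by (rule C_time_Ck_SucI[where u'="\<lambda>x t. x_deriv u x t * v x t + u x t * x_deriv v x t"])
       (auto intro!: C_time_C0_mult[OF M_pos] C_time_Ck_add Suc.IH u v derivative_eq_intros)
qed (rule C_time_C0_mult[OF M_pos])

lemma C_time_Ck_cmult: "C_time_Ck M T k u \<Longrightarrow> C_time_Ck M T k (\<lambda>x t. c * u x t)"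
  using C_time_Ck_mult[OF C_time_Ck_const[of T "\<lambda>t. c"]] by auto

lemma C_time_Ck_diff:
  "C_time_Ck M T k u \<Longrightarrow> C_time_Ck M T k v \<Longrightarrow> C_time_Ck M T k (\<lambda>x t. u x t - v x t)"
  using C_time_Ck_add[of M T k u "\<lambda>x t. (-1) * v x t"] C_time_Ck_cmult[of k v "-1"] by simp

lemma C_time_Ck_exp: "C_time_Ck M T k u \<Longrightarrow> C_time_Ck M T k (\<lambda>x t. exp (u x t))"
proof (induction k arbitrary: u)
  case 0
  show ?case
    by (rule C_time_C0_comp_continuous[OF M_pos 0, of UNIV]) (auto intro: continuous_intros)
next
  case (Suc k)
  note u = C_time_Ck_SucD[OF Suc.prems]
  have exp_u: "C_time_Ck M T k (\<lambda>x t. exp (u x t))" by (rule Suc.IH[OF u(2)])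
  show ?case
    by (rule C_time_Ck_SucI[where u'="\<lambda>x t. exp (u x t) * x_deriv u x t"])
       (auto intro!: C_time_Ck_le_imp[OF exp_u] C_time_Ck_mult exp_u u derivative_eq_intros)
qed

lemma C_time_Ck_inverse:
  assumes "c > 0" "\<And>x t. t \<in> {0..T} \<Longrightarrow> c \<le> u x t" "C_time_Ck M T k u"
  shows "C_time_Ck M T k (\<lambda>x t. 1 / u x t)"
  using assms(3)
proof (induction k)
  case 0
  show ?case
    by (rule C_time_C0_comp_continuous[OF M_pos 0, of "{c..}"])
       (use assms(1,2) in \<open>auto intro!: continuous_intros\<close>)
next
  case (Suc k)
  note u = C_time_Ck_SucD[OF Suc.prems]
  have inv: "C_time_Ck M T k (\<lambda>x t. 1 / u x t)" by (rule Suc.IH[OF u(2)])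
  show ?case
  proof (rule C_time_Ck_SucI[where u'="\<lambda>x t. (-1) * (x_deriv u x t * ((1 / u x t) * (1 / u x t)))"])
    show "C_time_Ck M T 0 (\<lambda>x t. 1 / u x t)" by (rule C_time_Ck_le_imp[OF inv]) simp
    show "C_time_Ck M T k (\<lambda>x t. (-1) * (x_deriv u x t * ((1 / u x t) * (1 / u x t))))"
      by (intro C_time_Ck_cmult C_time_Ck_mult u inv)
    fix t x assume t: "t \<in> {0..T}"
    have "u x t \<noteq> 0" using assms(1) assms(2)[OF t, of x] by auto
    then show "((\<lambda>y. 1 / u y t) has_real_derivative (-1) * (x_deriv u x t * ((1 / u x t) * (1 / u x t)))) (at x)"
      using u(4)[OF t, of x] by (auto intro!: derivative_eq_intros simp: field_simps power2_eq_square)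
  qed
qed

lemma C_time_Ck_ln:
  assumes "c > 0" "\<And>x t. t \<in> {0..T} \<Longrightarrow> c \<le> u x t" "C_time_Ck M T k u"
  shows "C_time_Ck M T k (\<lambda>x t. ln (u x t))"
proof -
  have "C_time_Ck M T 0 (\<lambda>x t. ln (u x t))"
    by (rule C_time_C0_comp_continuous[OF M_pos C_time_Ck_le_imp[OF assms(3)], of "{c..}"])
       (use assms(1,2) in \<open>auto intro!: continuous_intros\<close>)
  then show ?thesis
  proof (cases k)
    case (Suc j)
    note u = C_time_Ck_SucD[OF assms(3)[unfolded Suc]]
    show ?thesis unfolding Suc
    proof (rule C_time_Ck_SucI[where u'="\<lambda>x t. x_deriv u x t * (1 / u x t)"])
      show "C_time_Ck M T j (\<lambda>x t. x_deriv u x t * (1 / u x t))"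
        by (intro C_time_Ck_mult u C_time_Ck_inverse[OF assms(1,2)])
      fix t x assume t: "t \<in> {0..T}"
      have "u x t > 0" using assms(1) assms(2)[OF t, of x] by auto
      then show "((\<lambda>y. ln (u y t)) has_real_derivative x_deriv u x t * (1 / u x t)) (at x)"
        using u(4)[OF t, of x] by (auto intro!: derivative_eq_intros simp: field_simps)
    qed (rule \<open>C_time_Ck M T 0 (\<lambda>x t. ln (u x t))\<close>)
  qed simp
qed

lemma C_time_C0_lower_bound_from_period:
  assumes "C_time_Ck M T 0 a" "\<And>x t. x \<in> {0..M} \<Longrightarrow> t \<in> {0..T} \<Longrightarrow> c \<le> a x t"
    and "t \<in> {0..T}"
  shows "c \<le> a x t"
proof -
  have "\<forall>x. a (x + M) t = a x t" using assms(1,3) unfolding C_time_Ck_0_iff by blast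
  then obtain y where "y \<in> {0..M}" "a x t = a y t"
    by (rule periodic_value_in_period[OF M_pos, of "\<lambda>x. a x t"])
  then show ?thesis using assms(2,3) by simp
qed

lemma C_time_C0_exp_bounds:
  assumes "C_time_Ck M T 0 u"
  obtains k where "k > 1" "\<And>x t. t \<in> {0..T} \<Longrightarrow> 1 / k \<le> exp (u x t) \<and> exp (u x t) \<le> k"
proof -
  obtain B where B: "\<And>x t. t \<in> {0..T} \<Longrightarrow> \<bar>u x t\<bar> \<le> B"
    using C_time_C0_bounded[OF M_pos assms] by blast
  have "1 / exp (\<bar>B\<bar> + 1) \<le> exp (u x t) \<and> exp (u x t) \<le> exp (\<bar>B\<bar> + 1)" if "t \<in> {0..T}" for x t
  proof -
    have bounds: "- (\<bar>B\<bar> + 1) \<le> u x t" "u x t \<le> \<bar>B\<bar> + 1" using B[OF that, of x] by linarith+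
    have "1 / exp (\<bar>B\<bar> + 1) = exp (- (\<bar>B\<bar> + 1))" by (simp only: exp_minus inverse_eq_divide)
    also have "\<dots> \<le> exp (u x t)" using bounds(1) by simp
    finally show ?thesis using bounds(2) by simp
  qed
  then show thesis using that[of "exp (\<bar>B\<bar> + 1)"] by simp
qed

lemma C_time_Ck_divide:
  assumes "c > 0" "\<And>x t. t \<in> {0..T} \<Longrightarrow> c \<le> a x t" "C_time_Ck M T k b" "C_time_Ck M T k a"
  shows "C_time_Ck M T k (\<lambda>x t. b x t / a x t)"
  using C_time_Ck_mult[OF assms(3) C_time_Ck_inverse[OF assms(1,2,4)]] by simp

end

section \<open>Period mean and mean-free primitive\<close>

definition period_mean :: "real \<Rightarrow> (real \<Rightarrow> real \<Rightarrow> real) \<Rightarrow> real \<Rightarrow> real" where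
  "period_mean M h t = (1 / M) * (LBINT y=0..M. h y t)"

definition mean_free_primitive :: "real \<Rightarrow> (real \<Rightarrow> real \<Rightarrow> real) \<Rightarrow> real \<Rightarrow> real \<Rightarrow> real" where
  "mean_free_primitive M h x t = (LBINT y=0..x. h y t - period_mean M h t)"

lemma interval_integral_has_real_derivative:
  fixes f :: "real \<Rightarrow> real"
  assumes "continuous_on UNIV f"
  shows "((\<lambda>u. LBINT y=0..u. f y) has_real_derivative f x) (at x)"
proof -
  let ?a = "min (-1) (x - 1)" and ?b = "max 1 (x + 1)"
  have "((\<lambda>u. LBINT y=0..u. f y) has_vector_derivative f x) (at x within {?a..?b})"
    using interval_integral_FTC2[of ?a 0 ?b f x] continuous_on_subset[OF assms]
    by (simp add: zero_ereal_def)
  moreover have "at x within {?a..?b} = at x" by (rule at_within_Icc_at) auto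
  ultimately show ?thesis by (simp add: has_real_derivative_iff_has_vector_derivative)
qed

lemma interval_integral_eq_integral_continuous:
  fixes f :: "real \<Rightarrow> real"
  assumes "continuous_on UNIV f" "0 \<le> x"
  shows "(LBINT y=0..x. f y) = integral {0..x} f"
  using interval_integral_eq_integral[OF assms(2)]
     borel_integrable_atLeastAtMost'[OF continuous_on_subset[OF assms(1)], of 0 x]
  by (simp add: zero_ereal_def)

lemma is_time_deriv_from_period:
  fixes M :: real
  assumes "M > 0"
    and "\<And>x t. t \<in> {0..T} \<Longrightarrow> u (x + M) t = u x t"
    and "\<And>x t. t \<in> {0..T} \<Longrightarrow> ut (x + M) t = ut x t"
    and "\<And>x t. x \<in> {0..M} \<Longrightarrow> t \<in> {0..T} \<Longrightarrow> ((\<lambda>s. u x s) has_real_derivative ut x t) (at t within {0..T})"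
  shows "is_time_deriv T u ut"
  unfolding is_time_deriv_def
proof (intro allI ballI)
  fix x t assume t: "t \<in> {0..T}"
  obtain k :: int where k: "x + of_int k * M \<in> {0..M}" using shift_into_period[OF assms(1)] .
  have "ut (x + of_int k * M) t = ut x t"
    by (rule periodic_int_shift) (use assms(3)[OF t] in simp)
  with assms(4)[OF k t]
  have "((\<lambda>s. u (x + of_int k * M) s) has_real_derivative ut x t) (at t within {0..T})" by simp
  then show "((\<lambda>s. u x s) has_real_derivative ut x t) (at t within {0..T})"
    by (rule has_field_derivative_transform_within[OF _ zero_less_one t])
       (rule periodic_int_shift, use assms(2) in simp)
qed

context
  fixes M T :: real
  assumes M_pos: "M > 0"
begin

lemma C_time_C0_continuous_on_x: "C_time_Ck M T 0 h \<Longrightarrow> t \<in> {0..T} \<Longrightarrow> continuous_on A (\<lambda>y. h y t)"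
  unfolding C_time_Ck_0_iff using continuous_on_subset[of UNIV "\<lambda>y. h y t" A] by blast

lemma period_mean_eq_integral:
  "C_time_Ck M T 0 h \<Longrightarrow> t \<in> {0..T} \<Longrightarrow> period_mean M h t = (1/M) * integral {0..M} (\<lambda>y. h y t)"
  unfolding period_mean_def
  using interval_integral_eq_integral_continuous[OF C_time_C0_continuous_on_x, of h t M] M_pos by simp

lemma mean_free_primitive_eq_integral:
  assumes h: "C_time_Ck M T 0 h" and t: "t \<in> {0..T}" and x: "0 \<le> x"
  shows "mean_free_primitive M h x t = integral {0..x} (\<lambda>y. h y t) - x * period_mean M h t"
proof -
  have "mean_free_primitive M h x t = integral {0..x} (\<lambda>y. h y t - period_mean M h t)"
    unfolding mean_free_primitive_def
    by (rule interval_integral_eq_integral_continuous[OF _ x])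
       (intro continuous_intros C_time_C0_continuous_on_x[OF h t])
  also have "\<dots> = integral {0..x} (\<lambda>y. h y t) - x * period_mean M h t"
    using x C_time_C0_continuous_on_x[OF h t]
    by (simp add: integral_diff[OF integrable_continuous_real integrable_const_ivl])
  finally show ?thesis .
qed

lemma mean_free_primitive_has_real_derivative:
  assumes "C_time_Ck M T 0 h" "t \<in> {0..T}"
  shows "((\<lambda>y. mean_free_primitive M h y t) has_real_derivative h x t - period_mean M h t) (at x)"
  unfolding mean_free_primitive_def
  by (rule interval_integral_has_real_derivative[of "\<lambda>y. h y t - period_mean M h t"])
     (intro continuous_intros C_time_C0_continuous_on_x[OF assms])

text \<open>The increment over a period has zero derivative in \<open>x\<close> and vanishes at \<open>x = 0\<close>.\<close>

lemma mean_free_primitive_periodic: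
  assumes h: "C_time_Ck M T 0 h" and t: "t \<in> {0..T}"
  shows "mean_free_primitive M h (x + M) t = mean_free_primitive M h x t"
proof -
  let ?F = "\<lambda>x. mean_free_primitive M h (x + M) t - mean_free_primitive M h x t"
  have "\<forall>x. DERIV ?F x :> 0"
  proof
    fix x
    have "((\<lambda>y. mean_free_primitive M h (y + M) t) has_real_derivative (h (x + M) t - period_mean M h t) * 1) (at x)"
      by (rule DERIV_chain2[OF mean_free_primitive_has_real_derivative[OF h t]])
         (auto intro!: derivative_eq_intros)
    from DERIV_diff[OF this mean_free_primitive_has_real_derivative[OF h t, of x]]
    show "DERIV ?F x :> 0" using h t unfolding C_time_Ck_0_iff by simp
  qed
  from DERIV_isconst_all[OF this] have "?F x = ?F 0" .
  also have "?F 0 = 0"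
    using mean_free_primitive_eq_integral[OF h t, of M] mean_free_primitive_eq_integral[OF h t, of 0]
      period_mean_eq_integral[OF h t] M_pos by simp
  finally show ?thesis by simp
qed

lemma integral_diff_bound:
  assumes h: "C_time_Ck M T 0 h" and s: "s \<in> {0..T}" and t: "t \<in> {0..T}" and x: "0 \<le> x"
    and e: "\<And>y. \<bar>h y s - h y t\<bar> \<le> e"
  shows "\<bar>integral {0..x} (\<lambda>y. h y s) - integral {0..x} (\<lambda>y. h y t)\<bar> \<le> e * x"
proof -
  have cs: "continuous_on {0..x} (\<lambda>y. h y s)" "continuous_on {0..x} (\<lambda>y. h y t)"
    using C_time_C0_continuous_on_x[OF h] s t by blast+
  have "norm (integral {0..x} (\<lambda>y. h y s - h y t)) \<le> e * (x - 0)"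
    by (rule integral_bound[OF _ continuous_on_diff[OF cs]]) (use x e in auto)
  then show ?thesis
    by (simp add: integral_diff[OF integrable_continuous_real[OF cs(1)] integrable_continuous_real[OF cs(2)]])
qed

lemma period_mean_diff_bound:
  assumes h: "C_time_Ck M T 0 h" and s: "s \<in> {0..T}" and t: "t \<in> {0..T}"
    and e: "\<And>y. \<bar>h y s - h y t\<bar> \<le> e"
  shows "\<bar>period_mean M h s - period_mean M h t\<bar> \<le> e"
proof -
  have "\<bar>period_mean M h s - period_mean M h t\<bar>
      = \<bar>integral {0..M} (\<lambda>y. h y s) - integral {0..M} (\<lambda>y. h y t)\<bar> / M"
    using M_pos by (simp add: period_mean_eq_integral[OF h s] period_mean_eq_integral[OF h t]
        diff_divide_distrib[symmetric])
  also have "\<dots> \<le> e"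
    using integral_diff_bound[OF h s t _ e, of M] M_pos by (simp add: pos_divide_le_eq)
  finally show ?thesis .
qed

lemma mean_free_primitive_diff_bound:
  assumes h: "C_time_Ck M T 0 h" and s: "s \<in> {0..T}" and t: "t \<in> {0..T}"
    and e: "\<And>y. \<bar>h y s - h y t\<bar> \<le> e" and x: "x \<in> {0..M}"
  shows "\<bar>mean_free_primitive M h x s - mean_free_primitive M h x t\<bar> \<le> 2 * M * e"
proof -
  have "e \<ge> 0" using e[of 0] by linarith
  have "\<bar>integral {0..x} (\<lambda>y. h y s) - integral {0..x} (\<lambda>y. h y t)\<bar> \<le> e * x"
    using integral_diff_bound[OF h s t _ e] x by simp
  moreover have "\<bar>x * (period_mean M h s - period_mean M h t)\<bar> \<le> x * e"
    using period_mean_diff_bound[OF h s t e] x by (simp add: abs_mult mult_left_mono)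
  moreover have "x * e \<le> M * e" using x \<open>e \<ge> 0\<close> by (simp add: mult_right_mono)
  ultimately show ?thesis
    using x by (simp add: mean_free_primitive_eq_integral[OF h s] mean_free_primitive_eq_integral[OF h t])
      (simp add: algebra_simps abs_le_iff)
qed

lemma period_mean_continuous_on:
  assumes h: "C_time_Ck M T 0 h"
  shows "continuous_on {0..T} (period_mean M h)"
  unfolding continuous_on_iff
proof (intro ballI allI impI)
  fix t e :: real assume t: "t \<in> {0..T}" and e: "0 < e"
  obtain d where d: "d > 0" "\<forall>s\<in>{0..T}. \<bar>s - t\<bar> < d \<longrightarrow> (\<forall>x. \<bar>h x s - h x t\<bar> \<le> e/2)"
    using h t e unfolding C_time_Ck_0_iff by (meson half_gt_zero)
  have "\<bar>period_mean M h s - period_mean M h t\<bar> \<le> e/2" if "s \<in> {0..T}" "\<bar>s - t\<bar> < d" for s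
    using period_mean_diff_bound[OF h that(1) t] d(2) that by blast
  then show "\<exists>d>0. \<forall>s\<in>{0..T}. dist s t < d \<longrightarrow> dist (period_mean M h s) (period_mean M h t) < e"
    using d(1) e by (force simp: dist_real_def)
qed

lemma C_time_C0_mean_free_primitive:
  assumes h: "C_time_Ck M T 0 h"
  shows "C_time_Ck M T 0 (mean_free_primitive M h)"
  unfolding C_time_Ck_0_iff
proof (intro conjI ballI allI impI)
  fix t :: real assume t: "t \<in> {0..T}"
  show "continuous_on UNIV (\<lambda>x. mean_free_primitive M h x t)"
    using mean_free_primitive_has_real_derivative[OF h t]
    by (meson DERIV_isCont continuous_at_imp_continuous_on)
  fix x show "mean_free_primitive M h (x + M) t = mean_free_primitive M h x t"
    by (rule mean_free_primitive_periodic[OF h t])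
next
  fix t e :: real assume t: "t \<in> {0..T}" and e: "0 < e"
  have "e / (2 * M) > 0" using e M_pos by simp
  then obtain d where d: "d > 0" "\<forall>s\<in>{0..T}. \<bar>s - t\<bar> < d \<longrightarrow> (\<forall>x. \<bar>h x s - h x t\<bar> \<le> e / (2 * M))"
    using h t unfolding C_time_Ck_0_iff by blast
  show "\<exists>\<delta>>0. \<forall>s\<in>{0..T}. \<bar>s - t\<bar> < \<delta> \<longrightarrow>
      (\<forall>x. \<bar>mean_free_primitive M h x s - mean_free_primitive M h x t\<bar> \<le> e)"
  proof (intro exI[of _ d] conjI ballI impI allI)
    fix s x assume s: "s \<in> {0..T}" "\<bar>s - t\<bar> < d"
    obtain k :: int where k: "x + of_int k * M \<in> {0..M}" using shift_into_period[OF M_pos] .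
    have "mean_free_primitive M h (x + of_int k * M) r = mean_free_primitive M h x r"
      if "r \<in> {0..T}" for r
      by (rule periodic_int_shift) (use mean_free_primitive_periodic[OF h that] in simp)
    moreover have "\<bar>mean_free_primitive M h (x + of_int k * M) s - mean_free_primitive M h (x + of_int k * M) t\<bar>
        \<le> 2 * M * (e / (2 * M))"
      by (rule mean_free_primitive_diff_bound[OF h s(1) t _ k]) (use d s in blast)
    ultimately show "\<bar>mean_free_primitive M h x s - mean_free_primitive M h x t\<bar> \<le> e"
      using s(1) t M_pos by simp
  qed (rule d(1))
qed

lemma C_time_Ck_mean_free_primitive:
  assumes "C_time_Ck M T k h"
  shows "C_time_Ck M T (Suc k) (mean_free_primitive M h)"
proof -
  have h0: "C_time_Ck M T 0 h" using C_time_Ck_le_imp[OF assms] by simp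
  show ?thesis
  proof (rule C_time_Ck_SucI[where u'="\<lambda>x t. h x t - period_mean M h t"])
    show "C_time_Ck M T 0 (mean_free_primitive M h)"
      by (rule C_time_C0_mean_free_primitive[OF h0])
    show "C_time_Ck M T k (\<lambda>x t. h x t - period_mean M h t)"
      by (rule C_time_Ck_diff[OF M_pos assms C_time_Ck_const[OF period_mean_continuous_on[OF h0]]])
  qed (rule mean_free_primitive_has_real_derivative[OF h0])
qed

lemma integral_has_time_derivative:
  assumes h: "C_time_Ck M T 0 h" and ht: "C_time_Ck M T 0 ht"
    and d: "\<And>y s. s \<in> {0..T} \<Longrightarrow> ((\<lambda>s. h y s) has_real_derivative ht y s) (at s within {0..T})"
    and t: "t \<in> {0..T}"
  shows "((\<lambda>s. integral {0..x} (\<lambda>y. h y s)) has_real_derivative integral {0..x} (\<lambda>y. ht y t))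
           (at t within {0..T})"
proof -
  have "continuous_on ({0..T} \<times> {0..x}) ((\<lambda>(x, t). ht x t) \<circ> (\<lambda>(s, y). (y, s)))"
    by (rule continuous_on_compose[OF _ continuous_on_subset[OF C_time_C0_continuous_on[OF ht]]])
       (auto intro!: continuous_intros simp: case_prod_beta)
  then have "continuous_on ({0..T} \<times> cbox 0 x) (\<lambda>(s, y). ht y s)"
    by (simp add: o_def case_prod_beta)
  then have "((\<lambda>s. integral (cbox 0 x) (\<lambda>y. h y s)) has_field_derivative integral (cbox 0 x) (\<lambda>y. ht y t))
      (at t within {0..T})"
    using d t C_time_C0_continuous_on_x[OF h]
    by (intro leibniz_rule_field_derivative[where f="\<lambda>s y. h y s" and fx="\<lambda>s y. ht y s"])
       (auto intro: integrable_continuous_real)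
  then show ?thesis unfolding cbox_interval .
qed

lemma mean_free_primitive_is_time_deriv:
  assumes h: "C_time_Ck M T 0 h" and ht: "C_time_Ck M T 0 ht"
    and d: "\<And>y s. s \<in> {0..T} \<Longrightarrow> ((\<lambda>s. h y s) has_real_derivative ht y s) (at s within {0..T})"
  shows "is_time_deriv T (mean_free_primitive M h) (mean_free_primitive M ht)"
proof (rule is_time_deriv_from_period[OF M_pos])
  fix x t assume x: "x \<in> {0..M}" and t: "t \<in> {0..T}"
  let ?F = "\<lambda>h s. integral {0..x} (\<lambda>y. h y s) - x * ((1/M) * integral {0..M} (\<lambda>y. h y s))"
  have "((\<lambda>s. ?F h s) has_real_derivative ?F ht t) (at t within {0..T})"
    by (intro DERIV_diff DERIV_cmult integral_has_time_derivative[OF h ht d t])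
  moreover have eq: "mean_free_primitive M g x s = ?F g s"
    if "C_time_Ck M T 0 g" "s \<in> {0..T}" for g s
    using mean_free_primitive_eq_integral[OF that] period_mean_eq_integral[OF that] x
    by simp
  ultimately have "((\<lambda>s. ?F h s) has_real_derivative mean_free_primitive M ht x t) (at t within {0..T})"
    using ht t by simp
  then show "((\<lambda>s. mean_free_primitive M h x s) has_real_derivative mean_free_primitive M ht x t)
      (at t within {0..T})"
    by (rule has_field_derivative_transform_within[OF _ zero_less_one t]) (simp add: eq[OF h])
qed (use mean_free_primitive_periodic h ht in auto)

end

section \<open>The weight \<open>g_n\<close>\<close>

definition log_g_n :: "real \<Rightarrow> nat \<Rightarrow> (real \<Rightarrow> real \<Rightarrow> real) \<Rightarrow> (real \<Rightarrow> real \<Rightarrow> real) \<Rightarrow> real \<Rightarrow> real \<Rightarrow> real" where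
  "log_g_n M n a b x t =
     (1/2 - real n / 3) * ln (a x t) - 1/3 * mean_free_primitive M (\<lambda>y s. b y s / a y s) x t"

lemma delta_bar_eq_period_mean:
  "(\<And>y. a y t > 0) \<Longrightarrow> delta_bar M a b t = period_mean M (\<lambda>y s. b y s / a y s) t"
  by (simp add: delta_bar_def period_mean_def abs_of_pos)

lemma g_n_eq_exp_log_g_n:
  assumes "\<And>y. a y t > 0"
  shows "g_n M n a b x t = exp (log_g_n M n a b x t)"
  using assms[of x] delta_bar_eq_period_mean[where a=a and t=t, OF assms]
  by (simp add: g_n_def log_g_n_def mean_free_primitive_def powr_def exp_add [symmetric] algebra_simps)

locale positive_coefficient =
  fixes M T :: real and a :: "real \<Rightarrow> real \<Rightarrow> real" and c :: real
  assumes M_pos: "M > 0" and c_pos: "c > 0" and a_ge: "\<And>x t. t \<in> {0..T} \<Longrightarrow> c \<le> a x t"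
begin

lemma g_n_eq_exp_log_g_n_on: "t \<in> {0..T} \<Longrightarrow> g_n M n a b x t = exp (log_g_n M n a b x t)"
  using g_n_eq_exp_log_g_n a_ge c_pos by (metis less_le_trans)

lemma C_time_Ck_log_g_n:
  assumes "C_time_Ck M T (Suc k) a" "C_time_Ck M T k b"
  shows "C_time_Ck M T (Suc k) (log_g_n M n a b)"
proof -
  have "C_time_Ck M T k (\<lambda>y s. b y s / a y s)"
    by (rule C_time_Ck_divide[OF M_pos c_pos a_ge assms(2) C_time_Ck_Suc_imp[OF assms(1)]])
  then show ?thesis
    unfolding log_g_n_def[abs_def]
    by (intro C_time_Ck_diff[OF M_pos] C_time_Ck_cmult[OF M_pos] C_time_Ck_ln[OF M_pos c_pos a_ge]
        C_time_Ck_mean_free_primitive[OF M_pos] assms(1))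
qed

lemma C_time_Ck_g_n:
  assumes "C_time_Ck M T (Suc k) a" "C_time_Ck M T k b"
  shows "C_time_Ck M T (Suc k) (g_n M n a b)"
  using C_time_Ck_exp[OF M_pos C_time_Ck_log_g_n[OF assms]]
  by (rule C_time_Ck_cong) (simp add: g_n_eq_exp_log_g_n_on)

lemma g_n_bounds:
  assumes "C_time_Ck M T (Suc 0) a" "C_time_Ck M T 0 b"
  obtains kg where "kg > 1" "\<And>x t. t \<in> {0..T} \<Longrightarrow> 1 / kg \<le> g_n M n a b x t \<and> g_n M n a b x t \<le> kg"
proof -
  obtain kg where "kg > 1"
    "\<And>x t. t \<in> {0..T} \<Longrightarrow> 1 / kg \<le> exp (log_g_n M n a b x t) \<and> exp (log_g_n M n a b x t) \<le> kg"
    using C_time_C0_exp_bounds[OF M_pos C_time_Ck_Suc_imp[OF C_time_Ck_log_g_n[OF assms]]] by blast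
  then show thesis using that[of kg] by (simp add: g_n_eq_exp_log_g_n_on)
qed

lemma log_g_n_time_derivative:
  assumes "is_time_deriv T a aT" "is_time_deriv T b bt"
    and "C_time_Ck M T k a" "C_time_Ck M T k b" "C_time_Ck M T k aT" "C_time_Ck M T k bt"
  obtains lt where "is_time_deriv T (log_g_n M n a b) lt" "C_time_Ck M T k lt"
proof -
  define h where "h = (\<lambda>y s. b y s / a y s)"
  define J where "J = (\<lambda>y s. (bt y s * a y s - b y s * aT y s) / (a y s * a y s))"
  have a_pos: "t \<in> {0..T} \<Longrightarrow> a x t > 0" for x t using a_ge[of t x] c_pos by linarith
  have a_sq: "t \<in> {0..T} \<Longrightarrow> c * c \<le> a x t * a x t" for x t
    using a_ge[of t x] c_pos by (intro mult_mono) auto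
  have h: "C_time_Ck M T k h" unfolding h_def by (rule C_time_Ck_divide[OF M_pos c_pos a_ge assms(4,3)])
  have J: "C_time_Ck M T k J" unfolding J_def
    by (intro C_time_Ck_divide[OF M_pos _ a_sq] C_time_Ck_diff[OF M_pos] C_time_Ck_mult[OF M_pos] assms(3-6))
       (simp add: c_pos)
  have "((\<lambda>s. h y s) has_real_derivative J y s) (at s within {0..T})" if s: "s \<in> {0..T}" for y s
  proof -
    have "((\<lambda>s. a y s) has_real_derivative aT y s) (at s within {0..T})"
      "((\<lambda>s. b y s) has_real_derivative bt y s) (at s within {0..T})"
      using assms(1,2) s unfolding is_time_deriv_def by blast+
    then show ?thesis
      using a_pos[OF s, of y] unfolding h_def J_def
      by (auto intro!: derivative_eq_intros simp: field_simps)
  qed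
  then have "is_time_deriv T (mean_free_primitive M h) (mean_free_primitive M J)"
    using C_time_Ck_le_imp[OF h] C_time_Ck_le_imp[OF J]
    by (intro mean_free_primitive_is_time_deriv[OF M_pos]) auto
  then have "is_time_deriv T (log_g_n M n a b)
      (\<lambda>x t. (1/2 - real n / 3) * (aT x t / a x t) - 1/3 * mean_free_primitive M J x t)"
    unfolding is_time_deriv_def
  proof (intro allI ballI)
    fix x t assume t: "t \<in> {0..T}"
    assume "\<forall>x. \<forall>t\<in>{0..T}. ((\<lambda>s. mean_free_primitive M h x s) has_real_derivative
        mean_free_primitive M J x t) (at t within {0..T})"
    then have "((\<lambda>s. mean_free_primitive M h x s) has_real_derivative mean_free_primitive M J x t)
        (at t within {0..T})" using t by blast
    moreover have "((\<lambda>s. a x s) has_real_derivative aT x t) (at t within {0..T})"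
      using assms(1) t unfolding is_time_deriv_def by blast
    ultimately show "((\<lambda>s. log_g_n M n a b x s) has_real_derivative
        (1/2 - real n / 3) * (aT x t / a x t) - 1/3 * mean_free_primitive M J x t) (at t within {0..T})"
      using a_pos[OF t, of x] unfolding log_g_n_def h_def
      by (auto intro!: derivative_eq_intros simp: field_simps)
  qed
  moreover have "C_time_Ck M T k (\<lambda>x t. (1/2 - real n / 3) * (aT x t / a x t) - 1/3 * mean_free_primitive M J x t)"
    by (intro C_time_Ck_diff[OF M_pos] C_time_Ck_cmult[OF M_pos] C_time_Ck_divide[OF M_pos c_pos a_ge]
        assms(3,5) C_time_Ck_Suc_imp[OF C_time_Ck_mean_free_primitive[OF M_pos J]])
  ultimately show thesis by (rule that)
qed

lemma g_n_time_derivative: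
  assumes "is_time_deriv T a aT" "is_time_deriv T b bt"
    and "C_time_Ck M T (Suc k) a" "C_time_Ck M T k b" "C_time_Ck M T k aT" "C_time_Ck M T k bt"
  shows "\<exists>gt. is_time_deriv T (g_n M n a b) gt \<and> C_time_Ck M T k gt"
proof -
  obtain lt where lt: "is_time_deriv T (log_g_n M n a b) lt" "C_time_Ck M T k lt"
    using log_g_n_time_derivative[OF assms(1,2) C_time_Ck_Suc_imp[OF assms(3)] assms(4-6)] .
  have "is_time_deriv T (g_n M n a b) (\<lambda>x t. g_n M n a b x t * lt x t)"
    unfolding is_time_deriv_def
  proof (intro allI ballI)
    fix x t assume t: "t \<in> {0..T}"
    have "((\<lambda>s. log_g_n M n a b x s) has_real_derivative lt x t) (at t within {0..T})"
      using lt(1) t unfolding is_time_deriv_def by blast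
    then have "((\<lambda>s. exp (log_g_n M n a b x s)) has_real_derivative g_n M n a b x t * lt x t)
        (at t within {0..T})"
      by (auto intro!: derivative_eq_intros simp: g_n_eq_exp_log_g_n_on[OF t])
    then show "((\<lambda>s. g_n M n a b x s) has_real_derivative g_n M n a b x t * lt x t) (at t within {0..T})"
      by (rule has_field_derivative_transform_within[OF _ zero_less_one t]) (simp add: g_n_eq_exp_log_g_n_on)
  qed
  moreover have "C_time_Ck M T k (\<lambda>x t. g_n M n a b x t * lt x t)"
    by (intro C_time_Ck_mult[OF M_pos] lt(2) C_time_Ck_Suc_imp[OF C_time_Ck_g_n[OF assms(3,4)]])
  ultimately show ?thesis by blast
qed

lemma g_n_log_derivative_identity:
  assumes "C_time_Ck M T 0 a" "C_time_Ck M T 0 b" "t \<in> {0..T}"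
    and "((\<lambda>y. a y t) has_real_derivative a') (at x)"
  shows "(3/2 - real n) * deriv (\<lambda>y. a y t) x - b x t
           - 3 * a x t * deriv (\<lambda>y. g_n M n a b y t) x / g_n M n a b x t
         = - a x t * delta_bar M a b t"
proof -
  define h where "h = (\<lambda>y s. b y s / a y s)"
  have a_pos: "\<And>y. a y t > 0" using a_ge[OF assms(3)] c_pos by (meson less_le_trans)
  have h: "C_time_Ck M T 0 h" unfolding h_def by (rule C_time_Ck_divide[OF M_pos c_pos a_ge assms(2,1)])
  have "((\<lambda>y. g_n M n a b y t) has_real_derivative
      g_n M n a b x t * ((1/2 - real n / 3) * (a' / a x t) - 1/3 * (h x t - period_mean M h t))) (at x)"
    using assms(4) mean_free_primitive_has_real_derivative[OF M_pos h assms(3), of x] a_pos[of x]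
    unfolding g_n_eq_exp_log_g_n[where a=a and t=t, OF a_pos, abs_def] log_g_n_def h_def
    by (auto intro!: derivative_eq_intros simp: field_simps)
  then show ?thesis
    using DERIV_imp_deriv[OF assms(4)] a_pos[of x] delta_bar_eq_period_mean[where a=a and t=t, OF a_pos]
    by (simp add: DERIV_imp_deriv g_n_eq_exp_log_g_n[where a=a and t=t, OF a_pos] h_def field_simps)
qed

end

theorem lemma3:
  fixes M T :: real and n :: nat and a b :: "real \<Rightarrow> real \<Rightarrow> real"
  assumes "M > 0" and "T > 0" and "n \<ge> 4"
    and "C_time_Ck M T (n + 3) a"
    and "\<exists>a_t. is_time_deriv T a a_t \<and> C_time_Ck M T n a_t"
    and "C_time_Ck M T (n + 2) b"
    and "\<exists>bt. is_time_deriv T b bt \<and> C_time_Ck M T n bt"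
    and "\<exists>a0>0. \<forall>x\<in>{0..M}. \<forall>t\<in>{0..T}. a x t \<ge> a0"
    and "\<forall>t\<in>{0..T}. delta_bar M a b t \<ge> 0"
  shows "(\<exists>kg>1. \<forall>x\<in>{0..M}. \<forall>t\<in>{0..T}. 1 / kg \<le> g_n M n a b x t \<and> g_n M n a b x t \<le> kg)
       \<and> C_time_Ck M T (n + 3) (g_n M n a b)
       \<and> (\<exists>gt. is_time_deriv T (g_n M n a b) gt \<and> C_time_Ck M T n gt)
       \<and> (\<forall>j\<le>n. \<forall>t\<in>{0..T}. (deriv ^^ j) (\<lambda>x. g_n M n a b x t) 0 = (deriv ^^ j) (\<lambda>x. g_n M n a b x t) M)
       \<and> (\<forall>x\<in>{0..M}. \<forall>t\<in>{0..T}.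
            (3/2 - real n) * deriv (\<lambda>y. a y t) x - b x t
              - 3 * a x t * deriv (\<lambda>y. g_n M n a b y t) x / g_n M n a b x t \<le> 0)"
proof -
  obtain aT where aT: "is_time_deriv T a aT" "C_time_Ck M T n aT" using assms(5) by blast
  obtain bt where bt: "is_time_deriv T b bt" "C_time_Ck M T n bt" using assms(7) by blast
  obtain a0 where a0: "a0 > 0" "\<And>x t. x \<in> {0..M} \<Longrightarrow> t \<in> {0..T} \<Longrightarrow> a0 \<le> a x t"
    using assms(8) by blast
  have a: "C_time_Ck M T (Suc (n + 2)) a" "C_time_Ck M T (Suc n) a" "C_time_Ck M T (Suc 0) a"
    "C_time_Ck M T 0 a"
    using C_time_Ck_le_imp[OF assms(4)] by simp_all
  have b: "C_time_Ck M T n b" "C_time_Ck M T 0 b" using C_time_Ck_le_imp[OF assms(6)] by simp_all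
  have a_ge: "\<And>x t. t \<in> {0..T} \<Longrightarrow> a0 \<le> a x t"
    by (rule C_time_C0_lower_bound_from_period[OF assms(1) a(4) a0(2)])
  interpret positive_coefficient M T a a0
    using assms(1) a0(1) a_ge by unfold_locales
  have C2: "C_time_Ck M T (n + 3) (g_n M n a b)"
    using C_time_Ck_g_n[OF a(1) assms(6)] by (simp add: numeral_3_eq_3)
  obtain kg where "kg > 1" "\<And>x t. t \<in> {0..T} \<Longrightarrow> 1 / kg \<le> g_n M n a b x t \<and> g_n M n a b x t \<le> kg"
    using g_n_bounds[where n=n, OF a(3) b(2)] by blast
  then have C1: "\<exists>kg>1. \<forall>x\<in>{0..M}. \<forall>t\<in>{0..T}. 1 / kg \<le> g_n M n a b x t \<and> g_n M n a b x t \<le> kg"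
    by blast
  have C3: "\<forall>j\<le>n. \<forall>t\<in>{0..T}. (deriv ^^ j) (\<lambda>x. g_n M n a b x t) 0 = (deriv ^^ j) (\<lambda>x. g_n M n a b x t) M"
    using C2 Ck_per_funpow_deriv_periodic[of M "n + 3" _ _ 0] unfolding C_time_Ck_def by force
  have C4: "(3/2 - real n) * deriv (\<lambda>y. a y t) x - b x t
      - 3 * a x t * deriv (\<lambda>y. g_n M n a b y t) x / g_n M n a b x t \<le> 0" if t: "t \<in> {0..T}" for x t
  proof -
    have "((\<lambda>y. a y t) has_real_derivative x_deriv a x t) (at x)" by (rule C_time_Ck_SucD(4)[OF a(2) t])
    moreover have "a x t > 0" using a_ge[OF t, of x] a0(1) by linarith
    ultimately show ?thesis
      using g_n_log_derivative_identity[OF a(4) b(2) t] assms(9) t by simp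
  qed
  show ?thesis
    using C1 C2 C3 C4 g_n_time_derivative[OF aT(1) bt(1) a(2) b(1) aT(2) bt(2)] by blast
qed

end
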